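(* Let $G$ be a groupoid with finite object set $G_0$, $A$ a unital ring and $\alpha=(A_g,\alpha_g)_{g\in G}$ a unital partial action of $G$ on $A$ with $A=\bigoplus_{e\in G_0}A_e$. Then the ring extension $A\subset A\star_\alpha G$ is separable if and only if, for every $[e]\in G_0/\!\sim$, the extension $A_{[e]}\subset A_{[e]}\star_{\alpha_{[e]}}G_{[e]}$ is separable, where $A_{[e]}=\bigoplus_{f\in[e]}A_f$ and $\alpha_{[e]}=(A_g,\alpha_g)_{g\in G_{[e]}}$.
   Context: A groupoid $G$ is a small category in which every morphism is invertible; $G_0$ is its object set (objects identified with identity morphisms), $s,t$ source and target; $gh$ is defined iff $s(g)=t(h)$; $G(e,f)$ is the set of morphisms from $e$ to $f$; $e\sim f$ iff $G(e,f)\neq\emptyset$; $G_{[e]}$ is the full subgroupoid on the class $[e]$. A unital partial action of $G$ on $A$ is a family $\alpha=(A_g,\alpha_g)_{g\in G}$ where $A_{t(g)}$ is a two-sided ideal of $A$, $A_g=A1_g$ is a two-sided ideal of $A_{t(g)}$ with $1_g$ a central idempotent of $A$, $\alpha_g:A_{g^{-1}}\to A_g$ a ring isomorphism, such that $\alpha_e=\mathrm{id}_{A_e}$ for $e\in G_0$, $\alpha_h^{-1}(A_{g^{-1}}\cap A_h)\subseteq A_{(gh)^{-1}}$ and $\alpha_g(\alpha_h(x))=\alpha_{gh}(x)$ for $x\in\alpha_h^{-1}(A_{g^{-1}}\cap A_h)$, whenever $s(g)=t(h)$. The partial skew groupoid ring $A\star_\alpha G=\bigoplus_{g\in G}A_g\delta_g$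 has multiplication $(a_g\delta_g)(b_h\delta_h)=\alpha_g(\alpha_{g^{-1}}(a_g)b_h)\delta_{gh}$ if $s(g)=t(h)$ and $0$ otherwise; it is unital with $1=\sum_{e\in G_0}1_e\delta_e$, and $A$ is regarded as a subring via $a\mapsto\sum_{e\in G_0}(a1_e)\delta_e$. A ring extension $R\subseteq S$ (unital, same identity) is separable if the multiplication map $S\otimes_R S\to S$ splits as a map of $(S,S)$-bimodules; equivalently there exists $x\in S\otimes_R S$ with $m(x)=1_S$ and $sx=xs$ for all $s\in S$. *)

theory Defs
  imports "HOL-Algebra.Ideal"
begin

section \<open>Groupoids (objects identified with identity morphisms)\<close>

record 'g gpd =
  gmor :: "'g set"
  gobj :: "'g set"
  gsrc :: "'g \<Rightarrow> 'g"
  gtgt :: "'g \<Rightarrow> 'g"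
  gcmp :: "'g \<Rightarrow> 'g \<Rightarrow> 'g"
  ginv :: "'g \<Rightarrow> 'g"

definition groupoid :: "'g gpd \<Rightarrow> bool" where
  "groupoid G \<longleftrightarrow>
     gobj G \<subseteq> gmor G \<and>
     (\<forall>g\<in>gmor G. gsrc G g \<in> gobj G \<and> gtgt G g \<in> gobj G) \<and>
     (\<forall>e\<in>gobj G. gsrc G e = e \<and> gtgt G e = e) \<and>
     (\<forall>g\<in>gmor G. \<forall>h\<in>gmor G. gsrc G g = gtgt G h \<longrightarrow>
        gcmp G g h \<in> gmor G \<and> gsrc G (gcmp G g h) = gsrc G h \<and> gtgt G (gcmp G g h) = gtgt G g) \<and>
     (\<forall>f\<in>gmor G. \<forall>g\<in>gmor G. \<forall>h\<in>gmor G. gsrc G f = gtgt G g \<longrightarrow> gsrc G g = gtgt G h \<longrightarrow>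
        gcmp G (gcmp G f g) h = gcmp G f (gcmp G g h)) \<and>
     (\<forall>g\<in>gmor G. gcmp G g (gsrc G g) = g \<and> gcmp G (gtgt G g) g = g) \<and>
     (\<forall>g\<in>gmor G. ginv G g \<in> gmor G \<and> gsrc G (ginv G g) = gtgt G g \<and> gtgt G (ginv G g) = gsrc G g \<and>
        gcmp G g (ginv G g) = gtgt G g \<and> gcmp G (ginv G g) g = gsrc G g)"

definition obj_class :: "'g gpd \<Rightarrow> 'g \<Rightarrow> 'g set" where
  "obj_class G e = {f \<in> gobj G. \<exists>g\<in>gmor G. gsrc G g = e \<and> gtgt G g = f}"

definition sub_gpd :: "'g gpd \<Rightarrow> 'g \<Rightarrow> 'g gpd" where
  "sub_gpd G e = G\<lparr> gmor := {g \<in> gmor G. gsrc G g \<in> obj_class G e \<and> gtgt G g \<in> obj_class G e},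
                    gobj := obj_class G e \<rparr>"

text \<open>D g is the ideal A_g, u g the central idempotent 1_g, act g the isomorphism alpha_g.\<close>
definition unital_partial_action ::
  "'g gpd \<Rightarrow> ('a, 'm) ring_scheme \<Rightarrow> ('g \<Rightarrow> 'a set) \<Rightarrow> ('g \<Rightarrow> 'a) \<Rightarrow> ('g \<Rightarrow> 'a \<Rightarrow> 'a) \<Rightarrow> bool" where
  "unital_partial_action G A D u act \<longleftrightarrow>
     (\<forall>g\<in>gmor G. ideal (D (gtgt G g)) A) \<and>
     (\<forall>g\<in>gmor G. u g \<in> carrier A \<and> u g \<otimes>\<^bsub>A\<^esub> u g = u g \<and>
                   (\<forall>a\<in>carrier A. a \<otimes>\<^bsub>A\<^esub> u g = u g \<otimes>\<^bsub>A\<^esub> a)) \<and>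
     (\<forall>g\<in>gmor G. D g = {a \<otimes>\<^bsub>A\<^esub> u g | a. a \<in> carrier A}) \<and>
     (\<forall>g\<in>gmor G. D g \<subseteq> D (gtgt G g) \<and> additive_subgroup (D g) A \<and>
        (\<forall>x\<in>D (gtgt G g). \<forall>y\<in>D g. x \<otimes>\<^bsub>A\<^esub> y \<in> D g \<and> y \<otimes>\<^bsub>A\<^esub> x \<in> D g)) \<and>
     (\<forall>g\<in>gmor G. bij_betw (act g) (D (ginv G g)) (D g) \<and>
        (\<forall>x\<in>D (ginv G g). \<forall>y\<in>D (ginv G g).
            act g (x \<oplus>\<^bsub>A\<^esub> y) = act g x \<oplus>\<^bsub>A\<^esub> act g y \<and>
            act g (x \<otimes>\<^bsub>A\<^esub> y) = act g x \<otimes>\<^bsub>A\<^esub> act g y)) \<and>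
     (\<forall>e\<in>gobj G. \<forall>x\<in>D e. act e x = x) \<and>
     (\<forall>g\<in>gmor G. \<forall>h\<in>gmor G. gsrc G g = gtgt G h \<longrightarrow>
        (\<forall>x\<in>D (ginv G h). act h x \<in> D (ginv G g) \<longrightarrow>
            x \<in> D (ginv G (gcmp G g h)) \<and> act g (act h x) = act (gcmp G g h) x))"

definition direct_sum_objs :: "'g gpd \<Rightarrow> ('a, 'm) ring_scheme \<Rightarrow> ('g \<Rightarrow> 'a set) \<Rightarrow> bool" where
  "direct_sum_objs G A D \<longleftrightarrow>
     (\<forall>a\<in>carrier A. \<exists>!c. (\<forall>e\<in>gobj G. c e \<in> D e) \<and> (\<forall>e. e \<notin> gobj G \<longrightarrow> c e = \<zero>\<^bsub>A\<^esub>) \<and>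
                        a = finsum A c (gobj G))"

definition class_ring :: "'g gpd \<Rightarrow> ('a, 'm) ring_scheme \<Rightarrow> ('g \<Rightarrow> 'a set) \<Rightarrow> ('g \<Rightarrow> 'a) \<Rightarrow> 'g
    \<Rightarrow> ('a, 'm) ring_scheme" where
  "class_ring G A D u e = A\<lparr> carrier := {finsum A c (obj_class G e) | c. \<forall>f\<in>obj_class G e. c f \<in> D f},
                             one := finsum A u (obj_class G e) \<rparr>"

text \<open>Elements sum a_g delta_g are represented as finitely supported functions g to a_g in A_g.\<close>
definition skew_ring :: "'g gpd \<Rightarrow> ('a, 'm) ring_scheme \<Rightarrow> ('g \<Rightarrow> 'a set) \<Rightarrow> ('g \<Rightarrow> 'a)
    \<Rightarrow> ('g \<Rightarrow> 'a \<Rightarrow> 'a) \<Rightarrow> ('g \<Rightarrow> 'a) ring" where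
  "skew_ring G A D u act =
     \<lparr> carrier = {x. (\<forall>g. g \<notin> gmor G \<longrightarrow> x g = \<zero>\<^bsub>A\<^esub>) \<and> finite {g \<in> gmor G. x g \<noteq> \<zero>\<^bsub>A\<^esub>} \<and>
                     (\<forall>g\<in>gmor G. x g \<in> D g)},
       mult = (\<lambda>x y k. if k \<in> gmor G then
                 finsum A (\<lambda>g. act g (act (ginv G g) (x g) \<otimes>\<^bsub>A\<^esub> y (gcmp G (ginv G g) k)))
                        {g \<in> gmor G. x g \<noteq> \<zero>\<^bsub>A\<^esub> \<and> gtgt G g = gtgt G k}
               else \<zero>\<^bsub>A\<^esub>),
       one = (\<lambda>g. if g \<in> gobj G then u g else \<zero>\<^bsub>A\<^esub>),
       zero = (\<lambda>g. \<zero>\<^bsub>A\<^esub>),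
       add = (\<lambda>x y g. x g \<oplus>\<^bsub>A\<^esub> y g) \<rparr>"

definition skew_emb :: "'g gpd \<Rightarrow> ('a, 'm) ring_scheme \<Rightarrow> ('g \<Rightarrow> 'a) \<Rightarrow> 'a \<Rightarrow> 'g \<Rightarrow> 'a" where
  "skew_emb G A u a = (\<lambda>g. if g \<in> gobj G then a \<otimes>\<^bsub>A\<^esub> u g else \<zero>\<^bsub>A\<^esub>)"

text \<open>A formal sum of simple tensors, given as a list of pairs, is encoded by its integer
  coefficient function. Two formal sums denote the same element of S (x)_R S iff the difference
  of their coefficient functions lies in the subgroup generated by the balanced-bilinearity relations.\<close>

definition pt :: "'b \<times> 'b \<Rightarrow> 'b \<times> 'b \<Rightarrow> int" where
  "pt p = (\<lambda>q. if q = p then 1 else 0)"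

inductive_set tensor_rel :: "('r, 'n) ring_scheme \<Rightarrow> ('b, 'k) ring_scheme \<Rightarrow> ('r \<Rightarrow> 'b)
    \<Rightarrow> ('b \<times> 'b \<Rightarrow> int) set"
  for R S phi where
  tr_zero: "(\<lambda>_. 0) \<in> tensor_rel R S phi"
| tr_add: "x \<in> tensor_rel R S phi \<Longrightarrow> y \<in> tensor_rel R S phi \<Longrightarrow> (\<lambda>p. x p + y p) \<in> tensor_rel R S phi"
| tr_neg: "x \<in> tensor_rel R S phi \<Longrightarrow> (\<lambda>p. - x p) \<in> tensor_rel R S phi"
| tr_left: "a \<in> carrier S \<Longrightarrow> b \<in> carrier S \<Longrightarrow> c \<in> carrier S \<Longrightarrow>
     (\<lambda>p. pt (a \<oplus>\<^bsub>S\<^esub> b, c) p - pt (a, c) p - pt (b, c) p) \<in> tensor_rel R S phi"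
| tr_right: "a \<in> carrier S \<Longrightarrow> b \<in> carrier S \<Longrightarrow> c \<in> carrier S \<Longrightarrow>
     (\<lambda>p. pt (a, b \<oplus>\<^bsub>S\<^esub> c) p - pt (a, b) p - pt (a, c) p) \<in> tensor_rel R S phi"
| tr_mid: "a \<in> carrier S \<Longrightarrow> b \<in> carrier S \<Longrightarrow> r \<in> carrier R \<Longrightarrow>
     (\<lambda>p. pt (a \<otimes>\<^bsub>S\<^esub> phi r, b) p - pt (a, phi r \<otimes>\<^bsub>S\<^esub> b) p) \<in> tensor_rel R S phi"

definition coeffs :: "('b \<times> 'b) list \<Rightarrow> 'b \<times> 'b \<Rightarrow> int" where
  "coeffs xs = (\<lambda>p. int (count_list xs p))"

definition tensor_eq :: "('r, 'n) ring_scheme \<Rightarrow> ('b, 'k) ring_scheme \<Rightarrow> ('r \<Rightarrow> 'b)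
    \<Rightarrow> ('b \<times> 'b) list \<Rightarrow> ('b \<times> 'b) list \<Rightarrow> bool" where
  "tensor_eq R S phi xs ys \<longleftrightarrow> (\<lambda>p. coeffs xs p - coeffs ys p) \<in> tensor_rel R S phi"

definition separable_ext :: "('r, 'n) ring_scheme \<Rightarrow> ('b, 'k) ring_scheme \<Rightarrow> ('r \<Rightarrow> 'b) \<Rightarrow> bool" where
  "separable_ext R S phi \<longleftrightarrow>
     (\<exists>xs. set xs \<subseteq> carrier S \<times> carrier S \<and>
           finsum S (\<lambda>i. fst (xs ! i) \<otimes>\<^bsub>S\<^esub> snd (xs ! i)) {..<length xs} = \<one>\<^bsub>S\<^esub> \<and>
           (\<forall>s\<in>carrier S. tensor_eq R S phi (map (\<lambda>(a, b). (s \<otimes>\<^bsub>S\<^esub> a, b)) xs)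
                                                (map (\<lambda>(a, b). (a, b \<otimes>\<^bsub>S\<^esub> s)) xs)))"

end

theory Submission
  imports Defs
begin

text \<open>
  Restricting coefficients to the morphisms of the full subgroupoid G_[e] is a multiplicative
  projection of A \<star> G onto A_[e] \<star> G_[e] which fixes A_[e] \<star> G_[e] and maps the
  balanced tensor relations over A to those over A_[e] (an element r of A acts on the class [e]
  through its component r 1_[e]). It therefore carries a separability element of
  A \<subset> A \<star> G to one of A_[e] \<subset> A_[e] \<star> G_[e].

  Conversely, A \<star> G multiplies an element of A_[e] \<star> G_[e] only through its restriction
  to the class [e], so concatenating separability elements for one representative of each class
  gives a separability element of A \<subset> A \<star> G. Its multiplication sums the identities of the
  class rings, and this sum is the identity of A \<star> G because the idempotents 1_e of distinct
  objects are orthogonal, which is where A = \<Oplus> A_e is used.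
\<close>

section \<open>Groupoids\<close>

locale is_groupoid =
  fixes G :: "'g gpd"
  assumes groupoid: "groupoid G"
begin

abbreviation "mor \<equiv> gmor G"
abbreviation "obj \<equiv> gobj G"
abbreviation "src \<equiv> gsrc G"
abbreviation "tgt \<equiv> gtgt G"
abbreviation "cmp \<equiv> gcmp G"
abbreviation "minv \<equiv> ginv G"
abbreviation "cls \<equiv> obj_class G"

lemma obj_mor: "e \<in> obj \<Longrightarrow> e \<in> mor"
  and src_obj: "g \<in> mor \<Longrightarrow> src g \<in> obj"
  and tgt_obj: "g \<in> mor \<Longrightarrow> tgt g \<in> obj"
  and src_of_obj: "e \<in> obj \<Longrightarrow> src e = e"
  and tgt_of_obj: "e \<in> obj \<Longrightarrow> tgt e = e"
  using groupoid unfolding groupoid_def by blast+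

lemma cmp_mor: "g \<in> mor \<Longrightarrow> h \<in> mor \<Longrightarrow> src g = tgt h \<Longrightarrow> cmp g h \<in> mor"
  and src_cmp: "g \<in> mor \<Longrightarrow> h \<in> mor \<Longrightarrow> src g = tgt h \<Longrightarrow> src (cmp g h) = src h"
  and tgt_cmp: "g \<in> mor \<Longrightarrow> h \<in> mor \<Longrightarrow> src g = tgt h \<Longrightarrow> tgt (cmp g h) = tgt g"
  using groupoid unfolding groupoid_def by blast+

lemma cmp_assoc: "f \<in> mor \<Longrightarrow> g \<in> mor \<Longrightarrow> h \<in> mor \<Longrightarrow> src f = tgt g \<Longrightarrow> src g = tgt h \<Longrightarrow>
    cmp (cmp f g) h = cmp f (cmp g h)"
  using groupoid unfolding groupoid_def by blast

lemma cmp_src: "g \<in> mor \<Longrightarrow> cmp g (src g) = g"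
  and cmp_tgt: "g \<in> mor \<Longrightarrow> cmp (tgt g) g = g"
  using groupoid unfolding groupoid_def by blast+

lemma minv_mor: "g \<in> mor \<Longrightarrow> minv g \<in> mor"
  and src_minv: "g \<in> mor \<Longrightarrow> src (minv g) = tgt g"
  and tgt_minv: "g \<in> mor \<Longrightarrow> tgt (minv g) = src g"
  and cmp_minv_right: "g \<in> mor \<Longrightarrow> cmp g (minv g) = tgt g"
  and cmp_minv_left: "g \<in> mor \<Longrightarrow> cmp (minv g) g = src g"
  using groupoid unfolding groupoid_def by blast+

lemma minv_minv:
  assumes g: "g \<in> mor"
  shows "minv (minv g) = g"
proof -
  let ?i = "minv g" let ?j = "minv ?i"
  have i: "?i \<in> mor" and j: "?j \<in> mor" using g minv_mor by auto
  have "?j = cmp ?j (src ?j)" using cmp_src j by simp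
  also have "src ?j = cmp ?i g" using src_minv i cmp_minv_left g tgt_minv by simp
  also have "cmp ?j (cmp ?i g) = cmp (cmp ?j ?i) g"
    using cmp_assoc[OF j i g] src_minv tgt_minv i g by simp
  also have "cmp ?j ?i = tgt g" using cmp_minv_left[OF i] src_minv g by simp
  finally show ?thesis using cmp_tgt g by simp
qed

lemma minv_cmp:
  assumes g: "g \<in> mor" and k: "k \<in> mor" and tgt_eq: "tgt g = tgt k"
  shows "cmp (minv g) k \<in> mor" and "src (cmp (minv g) k) = src k"
    and "tgt (cmp (minv g) k) = src g" and "cmp g (cmp (minv g) k) = k"
proof -
  have i: "minv g \<in> mor" "src (minv g) = tgt k" "tgt (minv g) = src g"
    using g minv_mor src_minv tgt_minv tgt_eq by auto
  show "cmp (minv g) k \<in> mor" "src (cmp (minv g) k) = src k" "tgt (cmp (minv g) k) = src g"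
    using cmp_mor src_cmp tgt_cmp i k by auto
  have "cmp g (cmp (minv g) k) = cmp (cmp g (minv g)) k"
    using cmp_assoc[OF g i(1) k] src_minv g i by simp
  then show "cmp g (cmp (minv g) k) = k" using cmp_minv_right g tgt_eq cmp_tgt k by simp
qed

lemma cls_subset_obj: "cls e \<subseteq> obj"
  unfolding obj_class_def by auto

lemma cls_self: "e \<in> obj \<Longrightarrow> e \<in> cls e"
  unfolding obj_class_def using obj_mor src_of_obj tgt_of_obj by auto

lemma src_in_cls:
  assumes "tgt g \<in> cls e" and g: "g \<in> mor"
  shows "src g \<in> cls e"
proof -
  from assms(1) obtain h where h: "h \<in> mor" "src h = e" "tgt h = tgt g"
    unfolding obj_class_def by auto
  have "cmp (minv g) h \<in> mor" "src (cmp (minv g) h) = e" "tgt (cmp (minv g) h) = src g"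
    using minv_cmp[OF g h(1)] h by auto
  then show ?thesis using src_obj g unfolding obj_class_def by blast
qed

lemma tgt_in_cls:
  assumes "src g \<in> cls e" and g: "g \<in> mor"
  shows "tgt g \<in> cls e"
proof -
  from assms(1) obtain h where h: "h \<in> mor" "src h = e" "tgt h = src g"
    unfolding obj_class_def by auto
  have "cmp g h \<in> mor" "src (cmp g h) = e" "tgt (cmp g h) = tgt g"
    using cmp_mor src_cmp tgt_cmp g h by auto
  then show ?thesis using tgt_obj g unfolding obj_class_def by blast
qed

lemma cls_subset:
  assumes "f \<in> cls e"
  shows "cls f \<subseteq> cls e"
proof
  fix f' assume "f' \<in> cls f"
  then obtain k where "k \<in> mor" "src k = f" "tgt k = f'" unfolding obj_class_def by auto
  then show "f' \<in> cls e" using tgt_in_cls assms by blast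
qed

lemma cls_eq:
  assumes f: "f \<in> cls e"
  shows "cls f = cls e"
proof
  show "cls f \<subseteq> cls e" using cls_subset[OF f] .
  obtain h where h: "h \<in> mor" "src h = e" "tgt h = f" using f unfolding obj_class_def by auto
  then have "e \<in> cls f" using src_in_cls[of h f] f cls_subset_obj cls_self by auto
  then show "cls e \<subseteq> cls f" using cls_subset by blast
qed

end

section \<open>Finite sums in abelian monoids\<close>

definition lsum :: "('b, 'k) ring_scheme \<Rightarrow> ('c \<Rightarrow> 'b) \<Rightarrow> 'c list \<Rightarrow> 'b" where
  "lsum M F xs = foldr (\<lambda>x acc. F x \<oplus>\<^bsub>M\<^esub> acc) xs \<zero>\<^bsub>M\<^esub>"

lemma lsum_simps [simp]:
  "lsum M F [] = \<zero>\<^bsub>M\<^esub>"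
  "lsum M F (x # xs) = F x \<oplus>\<^bsub>M\<^esub> lsum M F xs"
  unfolding lsum_def by simp_all

lemma lsum_map: "lsum M F (map m xs) = lsum M (\<lambda>x. F (m x)) xs"
  by (induction xs) auto

lemma lsum_cong: "(\<And>x. x \<in> set xs \<Longrightarrow> F x = F' x) \<Longrightarrow> lsum M F xs = lsum M F' xs"
  by (induction xs) auto

context abelian_monoid
begin

lemma finsum_zero_eqI: "(\<And>i. i \<in> J \<Longrightarrow> F i = \<zero>) \<Longrightarrow> finsum G F J = \<zero>"
  by (rule add.finprod_one_eqI) simp

lemma lsum_closed: "(\<And>x. x \<in> set xs \<Longrightarrow> F x \<in> carrier G) \<Longrightarrow> lsum G F xs \<in> carrier G"
  by (induction xs) auto

lemma finsum_nth_eq_lsum: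
  "(\<And>x. x \<in> set xs \<Longrightarrow> F x \<in> carrier G) \<Longrightarrow> finsum G (\<lambda>i. F (xs ! i)) {..<length xs} = lsum G F xs"
proof (induction xs)
  case (Cons x xs)
  have indices: "{..<length (x # xs)} = insert 0 (Suc ` {..<length xs})"
    by (auto simp: image_iff less_Suc_eq_0_disj)
  have closed: "(\<lambda>i. F ((x # xs) ! i)) \<in> Suc ` {..<length xs} \<rightarrow> carrier G"
    using Cons.prems by auto
  have "finsum G (\<lambda>i. F ((x # xs) ! i)) {..<length (x # xs)}
      = F x \<oplus>\<^bsub>G\<^esub> finsum G (\<lambda>i. F ((x # xs) ! i)) (Suc ` {..<length xs})"
    unfolding indices by (subst finsum_insert) (use Cons.prems closed in auto)
  also have "finsum G (\<lambda>i. F ((x # xs) ! i)) (Suc ` {..<length xs}) = finsum G (\<lambda>i. F (xs ! i)) {..<length xs}"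
    using finsum_reindex[OF closed] by simp
  finally show ?case using Cons by simp
qed simp

lemma lsum_append:
  "(\<And>x. x \<in> set (xs @ ys) \<Longrightarrow> F x \<in> carrier G) \<Longrightarrow> lsum G F (xs @ ys) = lsum G F xs \<oplus>\<^bsub>G\<^esub> lsum G F ys"
  by (induction xs) (auto simp: lsum_closed a_assoc)

lemma lsum_concat:
  "(\<And>x. x \<in> set (concat xss) \<Longrightarrow> F x \<in> carrier G) \<Longrightarrow> lsum G F (concat xss) = lsum G (lsum G F) xss"
proof (induction xss)
  case (Cons xs xss)
  then show ?case using lsum_append[of xs "concat xss" F] by simp
qed simp

lemma lsum_distinct:
  "distinct xs \<Longrightarrow> (\<And>x. x \<in> set xs \<Longrightarrow> F x \<in> carrier G) \<Longrightarrow> lsum G F xs = finsum G F (set xs)"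
  by (induction xs) (auto simp: finsum_insert)

end

section \<open>Transporting tensor relations\<close>

definition pushforward :: "('p \<Rightarrow> 'q) \<Rightarrow> ('p \<Rightarrow> int) \<Rightarrow> 'q \<Rightarrow> int" where
  "pushforward m c = (\<lambda>q. sum c {p. c p \<noteq> 0 \<and> m p = q})"

lemma pushforward_eq_sum:
  assumes "finite P" and "{p. c p \<noteq> 0} \<subseteq> P"
  shows "pushforward m c q = sum c {p \<in> P. m p = q}"
  unfolding pushforward_def
  by (rule sum.mono_neutral_left) (use assms in \<open>auto elim: finite_subset\<close>)

lemma pushforward_zero: "pushforward m (\<lambda>_. 0) = (\<lambda>_. 0)"
  unfolding pushforward_def by simp

lemma pushforward_add:
  assumes "finite {p. c p \<noteq> 0}" and "finite {p. d p \<noteq> 0}"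
  shows "pushforward m (\<lambda>p. c p + d p) = (\<lambda>q. pushforward m c q + pushforward m d q)"
proof
  fix q
  let ?P = "{p. c p \<noteq> 0} \<union> {p. d p \<noteq> 0}"
  have P: "finite ?P" using assms by simp
  have "pushforward m (\<lambda>p. c p + d p) q = sum (\<lambda>p. c p + d p) {p \<in> ?P. m p = q}"
    by (rule pushforward_eq_sum[OF P]) auto
  also have "\<dots> = pushforward m c q + pushforward m d q"
    using pushforward_eq_sum[OF P, of c m q] pushforward_eq_sum[OF P, of d m q]
    by (auto simp: sum.distrib)
  finally show "pushforward m (\<lambda>p. c p + d p) q = pushforward m c q + pushforward m d q" .
qed

lemma pushforward_neg: "pushforward m (\<lambda>p. - c p) = (\<lambda>q. - pushforward m c q)"
  unfolding pushforward_def by (simp add: sum_negf)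

lemma pushforward_diff:
  assumes "finite {p. c p \<noteq> 0}" and "finite {p. d p \<noteq> 0}"
  shows "pushforward m (\<lambda>p. c p - d p) = (\<lambda>q. pushforward m c q - pushforward m d q)"
  using pushforward_add[of c "\<lambda>p. - d p" m] pushforward_neg[of m d] assms by simp

lemma pushforward_pt: "pushforward m (pt p) = pt (m p)"
proof
  fix q
  have "pushforward m (pt p) q = sum (pt p) {p' \<in> {p}. m p' = q}"
    by (rule pushforward_eq_sum) (auto simp: pt_def)
  also have "{p' \<in> {p}. m p' = q} = (if m p = q then {p} else {})" by auto
  finally show "pushforward m (pt p) q = pt (m p) q" by (simp add: pt_def)
qed

lemma finite_support_pt: "finite {q. pt p q \<noteq> 0}"
  unfolding pt_def by simp

lemma finite_support_diff:
  "finite {p. c p \<noteq> (0::int)} \<Longrightarrow> finite {p. d p \<noteq> 0} \<Longrightarrow> finite {p. c p - d p \<noteq> 0}"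
  by (rule finite_subset[of _ "{p. c p \<noteq> 0} \<union> {p. d p \<noteq> 0}"]) auto

lemma pushforward_pt_diff: "pushforward m (\<lambda>p. pt a p - pt b p) = (\<lambda>q. pt (m a) q - pt (m b) q)"
  by (simp add: pushforward_diff[OF finite_support_pt finite_support_pt] pushforward_pt)

lemma pushforward_pt_diff3:
  "pushforward m (\<lambda>p. pt a p - pt b p - pt c p) = (\<lambda>q. pt (m a) q - pt (m b) q - pt (m c) q)"
  by (simp add: pushforward_diff[OF finite_support_diff[OF finite_support_pt finite_support_pt]
      finite_support_pt] pushforward_pt_diff pushforward_pt)

lemma finite_support_tensor_rel: "c \<in> tensor_rel R S phi \<Longrightarrow> finite {p. c p \<noteq> 0}"
proof (induction rule: tensor_rel.induct)
  case (tr_add x y)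
  then show ?case by (rule_tac finite_subset[of _ "{p. x p \<noteq> 0} \<union> {p. y p \<noteq> 0}"]) auto
qed (rule finite_support_diff finite_support_pt | simp)+

lemma tensor_rel_pushforward:
  assumes left: "\<And>a b c. a \<in> carrier S \<Longrightarrow> b \<in> carrier S \<Longrightarrow> c \<in> carrier S \<Longrightarrow>
      (\<lambda>p. pt (m (a \<oplus>\<^bsub>S\<^esub> b, c)) p - pt (m (a, c)) p - pt (m (b, c)) p) \<in> tensor_rel R' S' phi'"
    and right: "\<And>a b c. a \<in> carrier S \<Longrightarrow> b \<in> carrier S \<Longrightarrow> c \<in> carrier S \<Longrightarrow>
      (\<lambda>p. pt (m (a, b \<oplus>\<^bsub>S\<^esub> c)) p - pt (m (a, b)) p - pt (m (a, c)) p) \<in> tensor_rel R' S' phi'"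
    and mid: "\<And>a b r. a \<in> carrier S \<Longrightarrow> b \<in> carrier S \<Longrightarrow> r \<in> carrier R \<Longrightarrow>
      (\<lambda>p. pt (m (a \<otimes>\<^bsub>S\<^esub> phi r, b)) p - pt (m (a, phi r \<otimes>\<^bsub>S\<^esub> b)) p) \<in> tensor_rel R' S' phi'"
    and c: "c \<in> tensor_rel R S phi"
  shows "pushforward m c \<in> tensor_rel R' S' phi'"
  using c
proof (induction rule: tensor_rel.induct)
  case tr_zero
  then show ?case by (simp add: pushforward_zero tensor_rel.tr_zero)
next
  case (tr_add x y)
  then show ?case
    by (simp add: pushforward_add finite_support_tensor_rel tensor_rel.tr_add)
next
  case (tr_neg x)
  then show ?case by (simp add: pushforward_neg tensor_rel.tr_neg)
qed (simp_all add: left right mid pushforward_pt_diff pushforward_pt_diff3)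

lemma coeffs_Cons: "coeffs (x # xs) = (\<lambda>p. pt x p + coeffs xs p)"
  unfolding coeffs_def pt_def by auto

lemma coeffs_append: "coeffs (xs @ ys) = (\<lambda>p. coeffs xs p + coeffs ys p)"
  unfolding coeffs_def by auto

lemma finite_support_coeffs: "finite {p. coeffs xs p \<noteq> 0}"
  by (rule finite_subset[of _ "set xs"]) (auto simp: coeffs_def count_list_0_iff)

lemma pushforward_coeffs: "pushforward m (coeffs xs) = coeffs (map m xs)"
proof (induction xs)
  case Nil
  then show ?case by (simp add: coeffs_def pushforward_zero)
next
  case (Cons x xs)
  then show ?case
    by (simp add: coeffs_Cons pushforward_add[OF finite_support_pt finite_support_coeffs] pushforward_pt)
qed

lemma tensor_eq_map:
  assumes "tensor_eq R S phi xs ys"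
    and "\<And>c. c \<in> tensor_rel R S phi \<Longrightarrow> pushforward m c \<in> tensor_rel R' S' phi'"
  shows "tensor_eq R' S' phi' (map m xs) (map m ys)"
  using assms pushforward_diff[OF finite_support_coeffs finite_support_coeffs, of m xs ys]
  unfolding tensor_eq_def pushforward_coeffs by metis

lemma tensor_eq_Nil: "tensor_eq R S phi [] []"
  unfolding tensor_eq_def coeffs_def by (simp add: tensor_rel.tr_zero)

lemma tensor_eq_append:
  assumes "tensor_eq R S phi xs ys" and "tensor_eq R S phi xs' ys'"
  shows "tensor_eq R S phi (xs @ xs') (ys @ ys')"
proof -
  have "(\<lambda>p. coeffs (xs @ xs') p - coeffs (ys @ ys') p) =
      (\<lambda>p. (coeffs xs p - coeffs ys p) + (coeffs xs' p - coeffs ys' p))"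
    by (auto simp: coeffs_append)
  then show ?thesis using assms unfolding tensor_eq_def by (simp add: tensor_rel.tr_add)
qed

lemma tensor_eq_concat:
  "(\<And>i. i \<in> set is \<Longrightarrow> tensor_eq R S phi (f i) (g i)) \<Longrightarrow>
    tensor_eq R S phi (concat (map f is)) (concat (map g is))"
  by (induction "is") (auto intro: tensor_eq_append tensor_eq_Nil)

lemma tensor_eq_mono:
  "tensor_rel R S phi \<subseteq> tensor_rel R' S' phi' \<Longrightarrow> tensor_eq R S phi xs ys \<Longrightarrow> tensor_eq R' S' phi' xs ys"
  unfolding tensor_eq_def by blast

definition separability_witness :: "('r, 'n) ring_scheme \<Rightarrow> ('b, 'k) ring_scheme \<Rightarrow> ('r \<Rightarrow> 'b)
    \<Rightarrow> ('b \<times> 'b) list \<Rightarrow> bool" where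
  "separability_witness R S phi xs \<longleftrightarrow> set xs \<subseteq> carrier S \<times> carrier S \<and>
     finsum S (\<lambda>i. fst (xs ! i) \<otimes>\<^bsub>S\<^esub> snd (xs ! i)) {..<length xs} = \<one>\<^bsub>S\<^esub> \<and>
     (\<forall>s\<in>carrier S. tensor_eq R S phi (map (\<lambda>(a, b). (s \<otimes>\<^bsub>S\<^esub> a, b)) xs)
                                       (map (\<lambda>(a, b). (a, b \<otimes>\<^bsub>S\<^esub> s)) xs))"

lemma separable_ext_iff_witness: "separable_ext R S phi \<longleftrightarrow> (\<exists>xs. separability_witness R S phi xs)"
  unfolding separable_ext_def separability_witness_def ..

section \<open>Skew groupoid rings\<close>

lemma skew_ring_simps:
  "carrier (skew_ring H B D u act) = {x. (\<forall>g. g \<notin> gmor H \<longrightarrow> x g = \<zero>\<^bsub>B\<^esub>) \<and>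
     finite {g \<in> gmor H. x g \<noteq> \<zero>\<^bsub>B\<^esub>} \<and> (\<forall>g\<in>gmor H. x g \<in> D g)}"
  "add (skew_ring H B D u act) = (\<lambda>x y g. x g \<oplus>\<^bsub>B\<^esub> y g)"
  "zero (skew_ring H B D u act) = (\<lambda>g. \<zero>\<^bsub>B\<^esub>)"
  "one (skew_ring H B D u act) = (\<lambda>g. if g \<in> gobj H then u g else \<zero>\<^bsub>B\<^esub>)"
  "mult (skew_ring H B D u act) = (\<lambda>x y k. if k \<in> gmor H then
     finsum B (\<lambda>g. act g (act (ginv H g) (x g) \<otimes>\<^bsub>B\<^esub> y (gcmp H (ginv H g) k)))
       {g \<in> gmor H. x g \<noteq> \<zero>\<^bsub>B\<^esub> \<and> gtgt H g = gtgt H k}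
     else \<zero>\<^bsub>B\<^esub>)"
  unfolding skew_ring_def by simp_all

lemma abelian_monoid_skew_ring:
  assumes B: "abelian_monoid B"
    and D: "\<And>g. g \<in> gmor H \<Longrightarrow>
      D g \<subseteq> carrier B \<and> \<zero>\<^bsub>B\<^esub> \<in> D g \<and> (\<forall>x\<in>D g. \<forall>y\<in>D g. x \<oplus>\<^bsub>B\<^esub> y \<in> D g)"
  shows "abelian_monoid (skew_ring H B D u act)"
proof -
  interpret B: abelian_monoid B by (rule B)
  let ?S = "skew_ring H B D u act"
  have val: "x g \<in> carrier B" if "x \<in> carrier ?S" for x g
    using that D B.zero_closed by (cases "g \<in> gmor H") (auto simp: skew_ring_simps, blast)
  show ?thesis
  proof (rule abelian_monoidI)
    fix x y assume x: "x \<in> carrier ?S" and y: "y \<in> carrier ?S"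
    have "{g \<in> gmor H. x g \<oplus>\<^bsub>B\<^esub> y g \<noteq> \<zero>\<^bsub>B\<^esub>} \<subseteq> {g \<in> gmor H. x g \<noteq> \<zero>\<^bsub>B\<^esub>} \<union> {g \<in> gmor H. y g \<noteq> \<zero>\<^bsub>B\<^esub>}"
      by auto
    then have "finite {g \<in> gmor H. x g \<oplus>\<^bsub>B\<^esub> y g \<noteq> \<zero>\<^bsub>B\<^esub>}"
      using x y by (auto simp: skew_ring_simps elim: finite_subset)
    then show "x \<oplus>\<^bsub>?S\<^esub> y \<in> carrier ?S" using x y D by (auto simp: skew_ring_simps)
  next
    show "\<zero>\<^bsub>?S\<^esub> \<in> carrier ?S" using D by (auto simp: skew_ring_simps)
  next
    fix x y z assume "x \<in> carrier ?S" "y \<in> carrier ?S" "z \<in> carrier ?S"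
    then show "x \<oplus>\<^bsub>?S\<^esub> y \<oplus>\<^bsub>?S\<^esub> z = x \<oplus>\<^bsub>?S\<^esub> (y \<oplus>\<^bsub>?S\<^esub> z)"
      using val by (auto simp: skew_ring_simps B.a_assoc)
  next
    fix x assume "x \<in> carrier ?S"
    then show "\<zero>\<^bsub>?S\<^esub> \<oplus>\<^bsub>?S\<^esub> x = x" using val by (auto simp: skew_ring_simps)
  next
    fix x y assume "x \<in> carrier ?S" "y \<in> carrier ?S"
    then show "x \<oplus>\<^bsub>?S\<^esub> y = y \<oplus>\<^bsub>?S\<^esub> x" using val by (auto simp: skew_ring_simps B.a_comm)
  qed
qed

lemma class_ring_simps:
  "carrier (class_ring G A D u e) =
     {finsum A c (obj_class G e) | c. \<forall>f\<in>obj_class G e. c f \<in> D f}"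
  "one (class_ring G A D u e) = finsum A u (obj_class G e)"
  "add (class_ring G A D u e) = add A"
  "zero (class_ring G A D u e) = zero A"
  "mult (class_ring G A D u e) = mult A"
  unfolding class_ring_def by simp_all

lemma sub_gpd_simps:
  "gmor (sub_gpd G e) = {g \<in> gmor G. gsrc G g \<in> obj_class G e \<and> gtgt G g \<in> obj_class G e}"
  "gobj (sub_gpd G e) = obj_class G e"
  "gsrc (sub_gpd G e) = gsrc G" "gtgt (sub_gpd G e) = gtgt G"
  "gcmp (sub_gpd G e) = gcmp G" "ginv (sub_gpd G e) = ginv G"
  unfolding sub_gpd_def by simp_all

section \<open>Unital partial actions on a direct sum\<close>

locale partial_action_direct_sum = is_groupoid G for G :: "'g gpd" +
  fixes A :: "('a, 'm) ring_scheme" and D :: "'g \<Rightarrow> 'a set" and u :: "'g \<Rightarrow> 'a"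
    and act :: "'g \<Rightarrow> 'a \<Rightarrow> 'a"
  assumes finite_obj: "finite (gobj G)" and ring: "ring A"
    and partial_action: "unital_partial_action G A D u act"
    and direct_sum: "direct_sum_objs G A D"
begin

sublocale A: ring A by (rule ring)

lemma u_carrier: "g \<in> mor \<Longrightarrow> u g \<in> carrier A"
  using partial_action unfolding unital_partial_action_def
  by (elim conjE) (drule (1) bspec, elim conjE, assumption)

lemma u_idem: "g \<in> mor \<Longrightarrow> u g \<otimes>\<^bsub>A\<^esub> u g = u g"
  using partial_action unfolding unital_partial_action_def
  by (elim conjE) (drule (1) bspec, elim conjE, assumption)

lemma D_subset_tgt: "g \<in> mor \<Longrightarrow> D g \<subseteq> D (tgt g)"
  using partial_action unfolding unital_partial_action_def
  by (elim conjE) (drule (1) bspec, elim conjE, assumption)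

lemma D_additive_subgroup: "g \<in> mor \<Longrightarrow> additive_subgroup (D g) A"
  using partial_action unfolding unital_partial_action_def
  by (elim conjE) (drule (1) bspec, elim conjE, assumption)

lemma act_bij: "g \<in> mor \<Longrightarrow> bij_betw (act g) (D (minv g)) (D g)"
  using partial_action unfolding unital_partial_action_def
  by (elim conjE) (drule (1) bspec, elim conjE, assumption)

lemma u_central: "g \<in> mor \<Longrightarrow> a \<in> carrier A \<Longrightarrow> a \<otimes>\<^bsub>A\<^esub> u g = u g \<otimes>\<^bsub>A\<^esub> a"
  using partial_action unfolding unital_partial_action_def
  by (elim conjE) (drule (1) bspec, elim conjE, drule (1) bspec, assumption)

lemma D_eq: "g \<in> mor \<Longrightarrow> D g = {a \<otimes>\<^bsub>A\<^esub> u g | a. a \<in> carrier A}"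
  using partial_action unfolding unital_partial_action_def
  by (elim conjE) (drule (1) bspec, assumption)

lemma act_add: "g \<in> mor \<Longrightarrow> x \<in> D (minv g) \<Longrightarrow> y \<in> D (minv g) \<Longrightarrow>
    act g (x \<oplus>\<^bsub>A\<^esub> y) = act g x \<oplus>\<^bsub>A\<^esub> act g y"
  using partial_action unfolding unital_partial_action_def
  by (elim conjE) (drule (1) bspec, elim conjE, drule (1) bspec, drule (1) bspec, elim conjE, assumption)

lemma act_obj: "e \<in> obj \<Longrightarrow> x \<in> D e \<Longrightarrow> act e x = x"
  using partial_action unfolding unital_partial_action_def
  by (elim conjE) (drule (1) bspec, drule (1) bspec, assumption)

lemma act_cmp: "g \<in> mor \<Longrightarrow> h \<in> mor \<Longrightarrow> src g = tgt h \<Longrightarrow> x \<in> D (minv h) \<Longrightarrow>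
    act h x \<in> D (minv g) \<Longrightarrow> x \<in> D (minv (cmp g h)) \<and> act g (act h x) = act (cmp g h) x"
  using partial_action unfolding unital_partial_action_def
  by (elim conjE) (drule (1) bspec, drule (1) bspec, drule (1) mp, drule (1) bspec, drule (1) mp, assumption)

lemma mem_D_iff:
  assumes g: "g \<in> mor"
  shows "x \<in> D g \<longleftrightarrow> x \<in> carrier A \<and> x \<otimes>\<^bsub>A\<^esub> u g = x"
  using u_carrier[OF g] u_idem[OF g] unfolding D_eq[OF g] by (auto simp: A.m_assoc) metis

lemma D_carrier: "g \<in> mor \<Longrightarrow> x \<in> D g \<Longrightarrow> x \<in> carrier A"
  by (simp add: mem_D_iff)

lemma zero_in_D: "g \<in> mor \<Longrightarrow> \<zero>\<^bsub>A\<^esub> \<in> D g"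
  by (simp add: mem_D_iff u_carrier)

lemma D_add_closed: "g \<in> mor \<Longrightarrow> x \<in> D g \<Longrightarrow> y \<in> D g \<Longrightarrow> x \<oplus>\<^bsub>A\<^esub> y \<in> D g"
  by (rule additive_subgroup.a_closed[OF D_additive_subgroup])

lemma finsum_in_D:
  assumes k: "k \<in> mor" and "finite J" and "\<And>i. i \<in> J \<Longrightarrow> F i \<in> D k"
  shows "finsum A F J \<in> D k"
  using assms(2,3)
proof (induction J rule: finite_induct)
  case empty
  then show ?case using zero_in_D[OF k] by simp
next
  case (insert j J)
  then have "finsum A F (insert j J) = F j \<oplus>\<^bsub>A\<^esub> finsum A F J"
    using D_carrier[OF k] by (intro A.finsum_insert) auto
  then show ?case using insert.IH insert.prems D_add_closed[OF k] by simp
qed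

lemma act_in_D: "g \<in> mor \<Longrightarrow> x \<in> D (minv g) \<Longrightarrow> act g x \<in> D g"
  using act_bij bij_betwE by blast

lemma act_zero:
  assumes g: "g \<in> mor"
  shows "act g \<zero>\<^bsub>A\<^esub> = \<zero>\<^bsub>A\<^esub>"
proof -
  have z: "\<zero>\<^bsub>A\<^esub> \<in> D (minv g)" using zero_in_D minv_mor g by blast
  have c: "act g \<zero>\<^bsub>A\<^esub> \<in> carrier A" using act_in_D[OF g z] D_carrier g by blast
  have "act g \<zero>\<^bsub>A\<^esub> = act g \<zero>\<^bsub>A\<^esub> \<oplus>\<^bsub>A\<^esub> act g \<zero>\<^bsub>A\<^esub>"
    using act_add[OF g z z] by simp
  then show ?thesis using A.add.l_cancel_one'[OF c c] by simp
qed

lemma act_mult_in_D: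
  assumes g: "g \<in> mor" and k: "k \<in> mor" and tgt_eq: "tgt g = tgt k"
    and x: "x \<in> D g" and y: "y \<in> D (cmp (minv g) k)"
  shows "act g (act (minv g) x \<otimes>\<^bsub>A\<^esub> y) \<in> D k"
proof -
  define h where "h = cmp (minv g) k"
  have h: "h \<in> mor" "tgt h = src g" "cmp g h = k"
    using minv_cmp[OF g k tgt_eq] unfolding h_def by auto
  have ig: "minv g \<in> mor" and ih: "minv h \<in> mor" using minv_mor g h by auto
  have x': "act (minv g) x \<in> D (minv g)" using act_in_D[OF ig] x minv_minv g by simp
  have xc: "act (minv g) x \<in> carrier A" and yc: "y \<in> carrier A"
    using x' y D_carrier ig h unfolding h_def by auto
  define z where "z = act (minv g) x \<otimes>\<^bsub>A\<^esub> y"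
  have zc: "z \<in> carrier A" using xc yc unfolding z_def by simp
  \<comment> \<open>z lies in D (minv g) and in D h, which lets act g, act h and act (minv h) compose on it\<close>
  have zh: "z \<in> D h"
    using mem_D_iff[OF h(1)] y zc xc yc u_carrier[OF h(1)] unfolding z_def h_def
    by (simp add: A.m_assoc)
  have "z \<otimes>\<^bsub>A\<^esub> u (minv g) = (act (minv g) x \<otimes>\<^bsub>A\<^esub> u (minv g)) \<otimes>\<^bsub>A\<^esub> y"
    using xc yc u_carrier[OF ig] u_central[OF ig yc] unfolding z_def by (simp add: A.m_assoc)
  then have zg: "z \<in> D (minv g)" using mem_D_iff[OF ig] x' zc z_def by simp
  define w where "w = act (minv h) z"
  have zih: "z \<in> D (minv (minv h))" using zh minv_minv h by simp
  have w: "w \<in> D (minv h)" using act_in_D[OF ih zih] w_def by simp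
  have "act h w = act (cmp h (minv h)) z"
    using act_cmp[OF h(1) ih _ zih] tgt_minv h w w_def by simp
  also have "\<dots> = act (tgt h) z" using cmp_minv_right h(1) by simp
  also have "\<dots> = z" using act_obj[OF tgt_obj[OF h(1)]] D_subset_tgt[OF h(1)] zh by blast
  finally have hw: "act h w = z" .
  have "w \<in> D (minv k) \<and> act g z = act k w"
    using act_cmp[OF g h(1) _ w] h hw zg by auto
  then show ?thesis using act_in_D[OF k] z_def by simp
qed

definition obj_decomposition :: "('g \<Rightarrow> 'a) \<Rightarrow> 'a \<Rightarrow> bool" where
  "obj_decomposition c a \<longleftrightarrow> (\<forall>e\<in>obj. c e \<in> D e) \<and> (\<forall>e. e \<notin> obj \<longrightarrow> c e = \<zero>\<^bsub>A\<^esub>) \<and>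
     a = finsum A c obj"

lemma obj_decomposition_unique:
  assumes a: "a \<in> carrier A" and "obj_decomposition c a" and "obj_decomposition c' a"
  shows "c = c'"
proof -
  have "\<exists>!c. obj_decomposition c a"
    using direct_sum a unfolding direct_sum_objs_def obj_decomposition_def by (rule bspec)
  then show ?thesis using assms(2,3) by (elim ex1E) blast
qed

lemma obj_decomposition_single:
  assumes f: "f \<in> obj" and x: "x \<in> D f"
  shows "obj_decomposition (\<lambda>e. if e = f then x else \<zero>\<^bsub>A\<^esub>) x"
  unfolding obj_decomposition_def
  using A.finsum_singleton[OF f finite_obj, of "\<lambda>_. x"] x f D_carrier zero_in_D obj_mor
  by (auto simp: eq_commute)

lemma D_obj_disjoint:
  assumes f: "f \<in> obj" and g: "g \<in> obj" and ne: "f \<noteq> g" and xf: "x \<in> D f" and xg: "x \<in> D g"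
  shows "x = \<zero>\<^bsub>A\<^esub>"
proof -
  have "(\<lambda>e. if e = f then x else \<zero>\<^bsub>A\<^esub>) = (\<lambda>e. if e = g then x else \<zero>\<^bsub>A\<^esub>)"
    using obj_decomposition_unique obj_decomposition_single[OF f xf] obj_decomposition_single[OF g xg]
      D_carrier obj_mor f xf by blast
  from fun_cong[OF this, of f] show ?thesis using ne by simp
qed

lemma u_orthogonal:
  assumes f: "f \<in> obj" and g: "g \<in> obj" and ne: "f \<noteq> g"
  shows "u f \<otimes>\<^bsub>A\<^esub> u g = \<zero>\<^bsub>A\<^esub>"
proof (rule D_obj_disjoint[OF f g ne])
  have fm: "f \<in> mor" and gm: "g \<in> mor" using f g obj_mor by auto
  show "u f \<otimes>\<^bsub>A\<^esub> u g \<in> D g" using D_eq[OF gm] u_carrier[OF fm] by blast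
  have "u f \<otimes>\<^bsub>A\<^esub> u g = u g \<otimes>\<^bsub>A\<^esub> u f" using u_central[OF gm u_carrier[OF fm]] .
  then show "u f \<otimes>\<^bsub>A\<^esub> u g \<in> D f" using D_eq[OF fm] u_carrier[OF gm] by auto
qed

abbreviation "S \<equiv> skew_ring G A D u act"
abbreviation "emb \<equiv> skew_emb G A u"
abbreviation "Ae e \<equiv> class_ring G A D u e"
abbreviation "Ge e \<equiv> sub_gpd G e"
abbreviation "Se e \<equiv> skew_ring (Ge e) (Ae e) D u act"
abbreviation "emb_e e \<equiv> skew_emb (Ge e) (Ae e) u"
abbreviation "mor_e e \<equiv> gmor (Ge e)"

lemma mor_e_iff: "g \<in> mor_e e \<longleftrightarrow> g \<in> mor \<and> src g \<in> cls e \<and> tgt g \<in> cls e"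
  by (simp add: sub_gpd_simps)

lemma mor_e_of_tgt: "g \<in> mor \<Longrightarrow> tgt g \<in> cls e \<Longrightarrow> g \<in> mor_e e"
  using src_in_cls mor_e_iff by blast

lemma mor_e_of_src: "g \<in> mor \<Longrightarrow> src g \<in> cls e \<Longrightarrow> g \<in> mor_e e"
  using tgt_in_cls mor_e_iff by blast

lemma finite_cls: "finite (cls e)"
  using finite_obj cls_subset_obj finite_subset by blast

lemma finsum_cls_singleton:
  assumes f: "f \<in> cls e" and x: "x \<in> carrier A"
  shows "finsum A (\<lambda>f'. if f' = f then x else \<zero>\<^bsub>A\<^esub>) (cls e) = x"
  using A.finsum_singleton[OF f finite_cls, of "\<lambda>_. x"] x by (simp add: eq_commute)

lemma D_subset_Ae:
  assumes f: "f \<in> cls e"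
  shows "D f \<subseteq> carrier (Ae e)"
proof
  fix x assume x: "x \<in> D f"
  have "x \<in> carrier A" using D_carrier x f cls_subset_obj obj_mor by blast
  then have "x = finsum A (\<lambda>f'. if f' = f then x else \<zero>\<^bsub>A\<^esub>) (cls e)"
    using finsum_cls_singleton[OF f] by simp
  moreover have "\<forall>f'\<in>cls e. (if f' = f then x else \<zero>\<^bsub>A\<^esub>) \<in> D f'"
    using x zero_in_D cls_subset_obj obj_mor by auto
  ultimately show "x \<in> carrier (Ae e)" unfolding class_ring_simps by blast
qed

lemma D_subset_Ae_mor_e: "g \<in> mor_e e \<Longrightarrow> D g \<subseteq> carrier (Ae e)"
  using D_subset_tgt D_subset_Ae mor_e_iff by blast

lemma Ae_carrier_subset: "carrier (Ae e) \<subseteq> carrier A"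
proof
  fix x assume "x \<in> carrier (Ae e)"
  then obtain c where c: "x = finsum A c (cls e)" "\<forall>f\<in>cls e. c f \<in> D f"
    unfolding class_ring_simps by auto
  then have "c \<in> cls e \<rightarrow> carrier A" using D_carrier cls_subset_obj obj_mor by blast
  then show "x \<in> carrier A" using c(1) A.finsum_closed by simp
qed

lemma abelian_monoid_Ae: "abelian_monoid (Ae e)"
proof (rule abelian_monoidI)
  fix x y assume "x \<in> carrier (Ae e)" "y \<in> carrier (Ae e)"
  then obtain c c' where c: "x = finsum A c (cls e)" "\<forall>f\<in>cls e. c f \<in> D f"
    and c': "y = finsum A c' (cls e)" "\<forall>f\<in>cls e. c' f \<in> D f"
    unfolding class_ring_simps by auto
  have "c \<in> cls e \<rightarrow> carrier A" "c' \<in> cls e \<rightarrow> carrier A"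
    using c(2) c'(2) D_carrier cls_subset_obj obj_mor by blast+
  then have "x \<oplus>\<^bsub>A\<^esub> y = finsum A (\<lambda>f. c f \<oplus>\<^bsub>A\<^esub> c' f) (cls e)"
    using A.finsum_addf c c' by simp
  moreover have "\<forall>f\<in>cls e. c f \<oplus>\<^bsub>A\<^esub> c' f \<in> D f"
    using c(2) c'(2) D_add_closed cls_subset_obj obj_mor by blast
  ultimately show "x \<oplus>\<^bsub>Ae e\<^esub> y \<in> carrier (Ae e)" unfolding class_ring_simps by blast
next
  have "\<zero>\<^bsub>A\<^esub> = finsum A (\<lambda>_. \<zero>\<^bsub>A\<^esub>) (cls e)" by (simp add: A.finsum_zero)
  moreover have "\<forall>f\<in>cls e. \<zero>\<^bsub>A\<^esub> \<in> D f" using zero_in_D cls_subset_obj obj_mor by blast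
  ultimately show "\<zero>\<^bsub>Ae e\<^esub> \<in> carrier (Ae e)" unfolding class_ring_simps by blast
next
  fix x y z assume "x \<in> carrier (Ae e)" "y \<in> carrier (Ae e)" "z \<in> carrier (Ae e)"
  then show "x \<oplus>\<^bsub>Ae e\<^esub> y \<oplus>\<^bsub>Ae e\<^esub> z = x \<oplus>\<^bsub>Ae e\<^esub> (y \<oplus>\<^bsub>Ae e\<^esub> z)"
    using Ae_carrier_subset by (simp add: class_ring_simps(3) A.a_assoc subset_iff)
next
  fix x assume "x \<in> carrier (Ae e)"
  then show "\<zero>\<^bsub>Ae e\<^esub> \<oplus>\<^bsub>Ae e\<^esub> x = x"
    using Ae_carrier_subset by (simp add: class_ring_simps(3,4) subset_iff)
next
  fix x y assume "x \<in> carrier (Ae e)" "y \<in> carrier (Ae e)"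
  then show "x \<oplus>\<^bsub>Ae e\<^esub> y = y \<oplus>\<^bsub>Ae e\<^esub> x"
    using Ae_carrier_subset by (simp add: class_ring_simps(3) A.a_comm subset_iff)
qed

lemma abelian_monoid_S: "abelian_monoid S"
  by (rule abelian_monoid_skew_ring)
    (use A.abelian_monoid_axioms D_carrier zero_in_D D_add_closed in auto)

lemma abelian_monoid_Se: "abelian_monoid (Se e)"
proof (rule abelian_monoid_skew_ring[OF abelian_monoid_Ae])
  fix g assume g: "g \<in> mor_e e"
  then have "g \<in> mor" by (simp add: mor_e_iff)
  then show "D g \<subseteq> carrier (Ae e) \<and> \<zero>\<^bsub>Ae e\<^esub> \<in> D g \<and> (\<forall>x\<in>D g. \<forall>y\<in>D g. x \<oplus>\<^bsub>Ae e\<^esub> y \<in> D g)"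
    using D_subset_Ae_mor_e[OF g] zero_in_D D_add_closed by (simp add: class_ring_simps)
qed

lemma finsum_Ae_eq:
  assumes "finite J" and "\<And>i. i \<in> J \<Longrightarrow> F i \<in> carrier (Ae e)"
  shows "finsum (Ae e) F J = finsum A F J"
  using assms
proof (induction J rule: finite_induct)
  case empty
  then show ?case using abelian_monoid.finsum_empty[OF abelian_monoid_Ae] A.finsum_empty
    by (simp add: class_ring_simps)
next
  case (insert j J)
  have "finsum (Ae e) F (insert j J) = F j \<oplus>\<^bsub>Ae e\<^esub> finsum (Ae e) F J"
    by (rule abelian_monoid.finsum_insert[OF abelian_monoid_Ae]) (use insert in auto)
  moreover have "finsum A F (insert j J) = F j \<oplus>\<^bsub>A\<^esub> finsum A F J"
    by (rule A.finsum_insert) (use insert Ae_carrier_subset in auto)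
  ultimately show ?case using insert by (simp add: class_ring_simps)
qed

definition skew_summand :: "('g \<Rightarrow> 'a) \<Rightarrow> ('g \<Rightarrow> 'a) \<Rightarrow> 'g \<Rightarrow> 'g \<Rightarrow> 'a" where
  "skew_summand x y k g = act g (act (minv g) (x g) \<otimes>\<^bsub>A\<^esub> y (cmp (minv g) k))"

definition left_support :: "('g \<Rightarrow> 'a) \<Rightarrow> 'g \<Rightarrow> 'g set" where
  "left_support x k = {g \<in> mor. x g \<noteq> \<zero>\<^bsub>A\<^esub> \<and> tgt g = tgt k}"

definition restrict_cls :: "'g \<Rightarrow> ('g \<Rightarrow> 'a) \<Rightarrow> 'g \<Rightarrow> 'a" where
  "restrict_cls e x = (\<lambda>g. if g \<in> mor_e e then x g else \<zero>\<^bsub>A\<^esub>)"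

lemma S_carrier_iff: "x \<in> carrier S \<longleftrightarrow> (\<forall>g. g \<notin> mor \<longrightarrow> x g = \<zero>\<^bsub>A\<^esub>) \<and>
    finite {g \<in> mor. x g \<noteq> \<zero>\<^bsub>A\<^esub>} \<and> (\<forall>g\<in>mor. x g \<in> D g)"
  by (simp add: skew_ring_simps)

lemma Se_carrier_iff: "x \<in> carrier (Se e) \<longleftrightarrow> (\<forall>g. g \<notin> mor_e e \<longrightarrow> x g = \<zero>\<^bsub>A\<^esub>) \<and>
    finite {g \<in> mor_e e. x g \<noteq> \<zero>\<^bsub>A\<^esub>} \<and> (\<forall>g\<in>mor_e e. x g \<in> D g)"
  by (simp add: skew_ring_simps class_ring_simps)

lemma mult_S_apply: "k \<in> mor \<Longrightarrow> (x \<otimes>\<^bsub>S\<^esub> y) k = finsum A (skew_summand x y k) (left_support x k)"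
  by (simp add: skew_ring_simps skew_summand_def[abs_def] left_support_def)

lemma mult_S_outside: "k \<notin> mor \<Longrightarrow> (x \<otimes>\<^bsub>S\<^esub> y) k = \<zero>\<^bsub>A\<^esub>"
  by (simp add: skew_ring_simps)

lemma finite_left_support: "x \<in> carrier S \<Longrightarrow> finite (left_support x k)"
  unfolding left_support_def S_carrier_iff by (auto elim: rev_finite_subset)

lemma skew_summand_in_D:
  assumes x: "x \<in> carrier S" and y: "y \<in> carrier S" and k: "k \<in> mor"
    and g: "g \<in> left_support x k"
  shows "skew_summand x y k g \<in> D k"
proof -
  have gm: "g \<in> mor" and tgt_eq: "tgt g = tgt k" using g left_support_def by auto
  show ?thesis unfolding skew_summand_def
    by (rule act_mult_in_D[OF gm k tgt_eq]) (use x y gm minv_cmp[OF gm k tgt_eq] in \<open>auto simp: S_carrier_iff\<close>)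
qed

lemma skew_summand_zero:
  assumes x: "x \<in> carrier S" and g: "g \<in> mor" and "y (cmp (minv g) k) = \<zero>\<^bsub>A\<^esub>"
  shows "skew_summand x y k g = \<zero>\<^bsub>A\<^esub>"
proof -
  have ig: "minv g \<in> mor" using minv_mor g by simp
  have "act (minv g) (x g) \<in> D (minv g)"
    using act_in_D[OF ig] x g minv_minv[OF g] by (simp add: S_carrier_iff)
  then have "act (minv g) (x g) \<in> carrier A" using D_carrier ig by blast
  then show ?thesis unfolding skew_summand_def using assms(3) act_zero g by simp
qed

lemma S_mult_closed:
  assumes x: "x \<in> carrier S" and y: "y \<in> carrier S"
  shows "x \<otimes>\<^bsub>S\<^esub> y \<in> carrier S"
proof -
  let ?z = "x \<otimes>\<^bsub>S\<^esub> y"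
  have in_D: "\<forall>k\<in>mor. ?z k \<in> D k"
    using finsum_in_D[OF _ finite_left_support[OF x] skew_summand_in_D[OF x y]]
    by (simp add: mult_S_apply)
  let ?X = "{g \<in> mor. x g \<noteq> \<zero>\<^bsub>A\<^esub>}" and ?Y = "{g \<in> mor. y g \<noteq> \<zero>\<^bsub>A\<^esub>}"
  \<comment> \<open>a nonzero coefficient of the product at k comes from some factorisation k = g (g\<inverse> k)\<close>
  have "{k \<in> mor. ?z k \<noteq> \<zero>\<^bsub>A\<^esub>} \<subseteq> (\<lambda>(g, h). cmp g h) ` (?X \<times> ?Y)"
  proof
    fix k assume "k \<in> {k \<in> mor. ?z k \<noteq> \<zero>\<^bsub>A\<^esub>}"
    then have k: "k \<in> mor" and nz: "finsum A (skew_summand x y k) (left_support x k) \<noteq> \<zero>\<^bsub>A\<^esub>"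
      using mult_S_apply by auto
    then obtain g where g: "g \<in> left_support x k" and "skew_summand x y k g \<noteq> \<zero>\<^bsub>A\<^esub>"
      using A.finsum_zero_eqI by meson
    moreover have gm: "g \<in> mor" and tgt_eq: "tgt g = tgt k" and "x g \<noteq> \<zero>\<^bsub>A\<^esub>"
      using g left_support_def by auto
    ultimately have "(g, cmp (minv g) k) \<in> ?X \<times> ?Y"
      using skew_summand_zero[OF x gm] minv_cmp[OF gm k tgt_eq] by auto
    moreover have "k = cmp g (cmp (minv g) k)" using minv_cmp[OF gm k tgt_eq] by simp
    ultimately show "k \<in> (\<lambda>(g, h). cmp g h) ` (?X \<times> ?Y)" by force
  qed
  moreover have "finite ((\<lambda>(g, h). cmp g h) ` (?X \<times> ?Y))" using x y by (simp add: S_carrier_iff)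
  ultimately have "finite {k \<in> mor. ?z k \<noteq> \<zero>\<^bsub>A\<^esub>}" by (rule finite_subset)
  then show ?thesis using in_D mult_S_outside by (simp add: S_carrier_iff)
qed

lemma restrict_cls_carrier: "x \<in> carrier S \<Longrightarrow> restrict_cls e x \<in> carrier (Se e)"
  unfolding Se_carrier_iff S_carrier_iff restrict_cls_def using mor_e_iff
  by (auto elim: rev_finite_subset)

lemma Se_carrier_subset: "y \<in> carrier (Se e) \<Longrightarrow> y \<in> carrier S"
  unfolding Se_carrier_iff S_carrier_iff using mor_e_iff zero_in_D
  by (auto elim: rev_finite_subset)

lemma restrict_cls_eq_self: "(\<And>k. k \<notin> mor_e e \<Longrightarrow> z k = \<zero>\<^bsub>A\<^esub>) \<Longrightarrow> restrict_cls e z = z"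
  unfolding restrict_cls_def by auto

lemma restrict_cls_Se: "y \<in> carrier (Se e) \<Longrightarrow> restrict_cls e y = y"
  by (rule restrict_cls_eq_self) (simp add: Se_carrier_iff)

lemma restrict_cls_mult:
  assumes x: "x \<in> carrier S" and y: "y \<in> carrier S"
  shows "restrict_cls e (x \<otimes>\<^bsub>S\<^esub> y) = restrict_cls e x \<otimes>\<^bsub>Se e\<^esub> restrict_cls e y"
proof
  fix k
  show "restrict_cls e (x \<otimes>\<^bsub>S\<^esub> y) k = (restrict_cls e x \<otimes>\<^bsub>Se e\<^esub> restrict_cls e y) k"
  proof (cases "k \<in> mor_e e")
    case False
    then show ?thesis by (simp add: restrict_cls_def skew_ring_simps class_ring_simps)
  next
    case True
    have k: "k \<in> mor" and tk: "tgt k \<in> cls e" using True mor_e_iff by auto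
    let ?I = "left_support x k"
    \<comment> \<open>every morphism ending at tgt k lies in the class subgroupoid, so no summand is lost\<close>
    have support_eq: "{g \<in> mor_e e. restrict_cls e x g \<noteq> \<zero>\<^bsub>Ae e\<^esub> \<and> gtgt (Ge e) g = gtgt (Ge e) k} = ?I"
      using mor_e_of_tgt tk
      by (auto simp: left_support_def restrict_cls_def class_ring_simps sub_gpd_simps)
    have summand_eq: "act g (act (ginv (Ge e) g) (restrict_cls e x g) \<otimes>\<^bsub>Ae e\<^esub>
        restrict_cls e y (gcmp (Ge e) (ginv (Ge e) g) k)) = skew_summand x y k g"
      if g: "g \<in> ?I" for g
    proof -
      have gm: "g \<in> mor" and tgt_eq: "tgt g = tgt k" using g left_support_def by auto
      have "g \<in> mor_e e" using mor_e_of_tgt gm tgt_eq tk by simp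
      moreover have "cmp (minv g) k \<in> mor_e e"
        using minv_cmp[OF gm k tgt_eq] True calculation unfolding mor_e_iff by auto
      ultimately show ?thesis
        by (simp add: restrict_cls_def skew_summand_def sub_gpd_simps class_ring_simps)
    qed
    have summand_Ae: "skew_summand x y k g \<in> carrier (Ae e)" if "g \<in> ?I" for g
      using skew_summand_in_D[OF x y k that] D_subset_tgt[OF k] D_subset_Ae[OF tk] by blast
    have "(restrict_cls e x \<otimes>\<^bsub>Se e\<^esub> restrict_cls e y) k
        = finsum (Ae e) (\<lambda>g. act g (act (ginv (Ge e) g) (restrict_cls e x g) \<otimes>\<^bsub>Ae e\<^esub>
            restrict_cls e y (gcmp (Ge e) (ginv (Ge e) g) k))) ?I"
      using True support_eq by (simp add: skew_ring_simps del: sub_gpd_simps)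
    also have "\<dots> = finsum (Ae e) (skew_summand x y k) ?I"
      by (rule abelian_monoid.finsum_cong'[OF abelian_monoid_Ae]) (use summand_eq summand_Ae in auto)
    also have "\<dots> = finsum A (skew_summand x y k) ?I"
      by (rule finsum_Ae_eq) (use finite_left_support[OF x] summand_Ae in auto)
    also have "\<dots> = (x \<otimes>\<^bsub>S\<^esub> y) k" using mult_S_apply[OF k] by simp
    finally show ?thesis using True by (simp add: restrict_cls_def)
  qed
qed

lemma mult_Se_left:
  assumes x: "x \<in> carrier S" and a: "a \<in> carrier (Se e)"
  shows "x \<otimes>\<^bsub>S\<^esub> a = restrict_cls e x \<otimes>\<^bsub>Se e\<^esub> a"
proof -
  have "restrict_cls e (x \<otimes>\<^bsub>S\<^esub> a) = x \<otimes>\<^bsub>S\<^esub> a"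
  proof (rule restrict_cls_eq_self)
    fix k assume nk: "k \<notin> mor_e e"
    show "(x \<otimes>\<^bsub>S\<^esub> a) k = \<zero>\<^bsub>A\<^esub>"
    proof (cases "k \<in> mor")
      case False
      then show ?thesis using mult_S_outside by simp
    next
      case k: True
      have "skew_summand x a k g = \<zero>\<^bsub>A\<^esub>" if g: "g \<in> left_support x k" for g
      proof -
        have gm: "g \<in> mor" and tgt_eq: "tgt g = tgt k" using g left_support_def by auto
        have "src (cmp (minv g) k) = src k" using minv_cmp[OF gm k tgt_eq] by simp
        then have "cmp (minv g) k \<notin> mor_e e" using mor_e_of_src[OF k] nk mor_e_iff by auto
        then have "a (cmp (minv g) k) = \<zero>\<^bsub>A\<^esub>" using a Se_carrier_iff by blast
        then show ?thesis using skew_summand_zero[OF x gm] by simp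
      qed
      then show ?thesis unfolding mult_S_apply[OF k] by (rule A.finsum_zero_eqI)
    qed
  qed
  then show ?thesis
    using restrict_cls_mult[OF x Se_carrier_subset[OF a]] restrict_cls_Se[OF a] by simp
qed

lemma mult_Se_right:
  assumes x: "x \<in> carrier S" and a: "a \<in> carrier (Se e)"
  shows "a \<otimes>\<^bsub>S\<^esub> x = a \<otimes>\<^bsub>Se e\<^esub> restrict_cls e x"
proof -
  have "restrict_cls e (a \<otimes>\<^bsub>S\<^esub> x) = a \<otimes>\<^bsub>S\<^esub> x"
  proof (rule restrict_cls_eq_self)
    fix k assume nk: "k \<notin> mor_e e"
    show "(a \<otimes>\<^bsub>S\<^esub> x) k = \<zero>\<^bsub>A\<^esub>"
    proof (cases "k \<in> mor")
      case False
      then show ?thesis using mult_S_outside by simp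
    next
      case k: True
      have "left_support a k = {}"
      proof (rule ccontr)
        assume "left_support a k \<noteq> {}"
        then obtain g where g: "g \<in> mor" "a g \<noteq> \<zero>\<^bsub>A\<^esub>" "tgt g = tgt k"
          unfolding left_support_def by auto
        then have "g \<in> mor_e e" using a Se_carrier_iff by blast
        then have "tgt k \<in> cls e" using g mor_e_iff by auto
        then show False using mor_e_of_tgt[OF k] nk by simp
      qed
      then show ?thesis using mult_S_apply[OF k] by simp
    qed
  qed
  then show ?thesis
    using restrict_cls_mult[OF Se_carrier_subset[OF a] x] restrict_cls_Se[OF a] by simp
qed

lemma restrict_cls_add: "restrict_cls e (a \<oplus>\<^bsub>S\<^esub> b) = restrict_cls e a \<oplus>\<^bsub>Se e\<^esub> restrict_cls e b"
  by (auto simp: restrict_cls_def skew_ring_simps class_ring_simps)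

lemma restrict_cls_lsum: "restrict_cls e (lsum S F xs) = lsum (Se e) (\<lambda>x. restrict_cls e (F x)) xs"
proof (induction xs)
  case Nil
  then show ?case by (auto simp: restrict_cls_def skew_ring_simps class_ring_simps)
qed (simp add: restrict_cls_add)

lemma restrict_cls_one: "restrict_cls e \<one>\<^bsub>S\<^esub> = \<one>\<^bsub>Se e\<^esub>"
proof
  fix g
  show "restrict_cls e \<one>\<^bsub>S\<^esub> g = \<one>\<^bsub>Se e\<^esub> g"
    using cls_subset_obj obj_mor src_of_obj tgt_of_obj
    by (auto simp: restrict_cls_def skew_ring_simps sub_gpd_simps class_ring_simps)
qed

lemma lsum_S_eq_Se: "lsum S F xs = lsum (Se e) F xs"
  unfolding lsum_def by (simp add: skew_ring_simps class_ring_simps)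

lemma lsum_S_apply: "lsum S F xs g = lsum A (\<lambda>x. F x g) xs"
  by (induction xs) (auto simp: skew_ring_simps)

lemma emb_carrier:
  assumes r: "r \<in> carrier A"
  shows "emb r \<in> carrier S"
proof -
  have "{g \<in> mor. emb r g \<noteq> \<zero>\<^bsub>A\<^esub>} \<subseteq> obj" by (auto simp: skew_emb_def)
  then have "finite {g \<in> mor. emb r g \<noteq> \<zero>\<^bsub>A\<^esub>}" using finite_obj finite_subset by blast
  moreover have "\<forall>g\<in>mor. emb r g \<in> D g" using D_eq r zero_in_D by (auto simp: skew_emb_def)
  ultimately show ?thesis using obj_mor by (auto simp: S_carrier_iff skew_emb_def)
qed

lemma restrict_cls_emb: "restrict_cls e (emb r) = emb_e e r"
proof
  fix g
  show "restrict_cls e (emb r) g = emb_e e r g"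
    using cls_subset_obj obj_mor src_of_obj tgt_of_obj
    by (auto simp: restrict_cls_def skew_emb_def sub_gpd_simps class_ring_simps)
qed

definition cls_component :: "'g \<Rightarrow> 'a \<Rightarrow> 'a" where
  "cls_component e r = finsum A (\<lambda>f. r \<otimes>\<^bsub>A\<^esub> u f) (cls e)"

lemma cls_component_carrier:
  assumes r: "r \<in> carrier A"
  shows "cls_component e r \<in> carrier (Ae e)"
proof -
  have "\<forall>f\<in>cls e. r \<otimes>\<^bsub>A\<^esub> u f \<in> D f" using D_eq r cls_subset_obj obj_mor by blast
  then show ?thesis unfolding class_ring_simps cls_component_def by blast
qed

lemma cls_component_mult_u:
  assumes r: "r \<in> carrier A" and g: "g \<in> cls e"
  shows "cls_component e r \<otimes>\<^bsub>A\<^esub> u g = r \<otimes>\<^bsub>A\<^esub> u g"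
proof -
  have gO: "g \<in> obj" and gm: "g \<in> mor" using g cls_subset_obj obj_mor by auto
  have uc: "(\<lambda>f. r \<otimes>\<^bsub>A\<^esub> u f) \<in> cls e \<rightarrow> carrier A" using r u_carrier cls_subset_obj obj_mor by blast
  have "cls_component e r \<otimes>\<^bsub>A\<^esub> u g = finsum A (\<lambda>f. r \<otimes>\<^bsub>A\<^esub> u f \<otimes>\<^bsub>A\<^esub> u g) (cls e)"
    unfolding cls_component_def by (rule A.finsum_ldistr[OF finite_cls u_carrier[OF gm] uc])
  also have "\<dots> = finsum A (\<lambda>f. if f = g then r \<otimes>\<^bsub>A\<^esub> u g else \<zero>\<^bsub>A\<^esub>) (cls e)"
  proof (rule A.finsum_cong')
    fix f assume "f \<in> cls e"
    then have fO: "f \<in> obj" and fm: "f \<in> mor" using cls_subset_obj obj_mor by auto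
    show "r \<otimes>\<^bsub>A\<^esub> u f \<otimes>\<^bsub>A\<^esub> u g = (if f = g then r \<otimes>\<^bsub>A\<^esub> u g else \<zero>\<^bsub>A\<^esub>)"
      using r u_carrier[OF gm] u_carrier[OF fm] u_idem[OF gm] u_orthogonal[OF fO gO]
      by (simp add: A.m_assoc)
  qed (use r u_carrier gm in auto)
  also have "\<dots> = r \<otimes>\<^bsub>A\<^esub> u g" using finsum_cls_singleton[OF g] r u_carrier[OF gm] by simp
  finally show ?thesis .
qed

lemma emb_e_cls_component: "r \<in> carrier A \<Longrightarrow> emb_e e (cls_component e r) = emb_e e r"
  by (auto simp: skew_emb_def sub_gpd_simps class_ring_simps cls_component_mult_u)

lemma tensor_rel_Se_subset: "tensor_rel (Ae e) (Se e) (emb_e e) \<subseteq> tensor_rel A S emb"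
proof
  fix c assume "c \<in> tensor_rel (Ae e) (Se e) (emb_e e)"
  then show "c \<in> tensor_rel A S emb"
  proof (induction rule: tensor_rel.induct)
    case (tr_left a b c)
    have "a \<oplus>\<^bsub>Se e\<^esub> b = a \<oplus>\<^bsub>S\<^esub> b" by (simp add: skew_ring_simps class_ring_simps)
    then show ?case using tensor_rel.tr_left[OF tr_left[THEN Se_carrier_subset]] by simp
  next
    case (tr_right a b c)
    have "b \<oplus>\<^bsub>Se e\<^esub> c = b \<oplus>\<^bsub>S\<^esub> c" by (simp add: skew_ring_simps class_ring_simps)
    then show ?case using tensor_rel.tr_right[OF tr_right[THEN Se_carrier_subset]] by simp
  next
    case (tr_mid a b r)
    have r: "r \<in> carrier A" using tr_mid(3) Ae_carrier_subset by blast
    have "a \<otimes>\<^bsub>Se e\<^esub> emb_e e r = a \<otimes>\<^bsub>S\<^esub> emb r"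
      using mult_Se_right[OF emb_carrier[OF r] tr_mid(1)] restrict_cls_emb by simp
    moreover have "emb_e e r \<otimes>\<^bsub>Se e\<^esub> b = emb r \<otimes>\<^bsub>S\<^esub> b"
      using mult_Se_left[OF emb_carrier[OF r] tr_mid(2)] restrict_cls_emb by simp
    ultimately show ?case
      using tensor_rel.tr_mid[OF tr_mid(1,2)[THEN Se_carrier_subset] r] by simp
  qed (auto intro: tensor_rel.intros)
qed

lemma tensor_rel_restrict_cls:
  "c \<in> tensor_rel A S emb \<Longrightarrow>
    pushforward (map_prod (restrict_cls e) (restrict_cls e)) c \<in> tensor_rel (Ae e) (Se e) (emb_e e)"
proof (rule tensor_rel_pushforward)
  fix a b c assume "a \<in> carrier S" "b \<in> carrier S" "c \<in> carrier S"
  then show "(\<lambda>p. pt (map_prod (restrict_cls e) (restrict_cls e) (a \<oplus>\<^bsub>S\<^esub> b, c)) p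
      - pt (map_prod (restrict_cls e) (restrict_cls e) (a, c)) p
      - pt (map_prod (restrict_cls e) (restrict_cls e) (b, c)) p) \<in> tensor_rel (Ae e) (Se e) (emb_e e)"
    using tensor_rel.tr_left[OF restrict_cls_carrier restrict_cls_carrier restrict_cls_carrier]
    by (simp add: restrict_cls_add)
next
  fix a b c assume "a \<in> carrier S" "b \<in> carrier S" "c \<in> carrier S"
  then show "(\<lambda>p. pt (map_prod (restrict_cls e) (restrict_cls e) (a, b \<oplus>\<^bsub>S\<^esub> c)) p
      - pt (map_prod (restrict_cls e) (restrict_cls e) (a, b)) p
      - pt (map_prod (restrict_cls e) (restrict_cls e) (a, c)) p) \<in> tensor_rel (Ae e) (Se e) (emb_e e)"
    using tensor_rel.tr_right[OF restrict_cls_carrier restrict_cls_carrier restrict_cls_carrier]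
    by (simp add: restrict_cls_add)
next
  fix a b r assume a: "a \<in> carrier S" and b: "b \<in> carrier S" and r: "r \<in> carrier A"
  \<comment> \<open>r need not lie in the class ring, but its class component has the same image\<close>
  have "restrict_cls e (a \<otimes>\<^bsub>S\<^esub> emb r) = restrict_cls e a \<otimes>\<^bsub>Se e\<^esub> emb_e e (cls_component e r)"
    and "restrict_cls e (emb r \<otimes>\<^bsub>S\<^esub> b) = emb_e e (cls_component e r) \<otimes>\<^bsub>Se e\<^esub> restrict_cls e b"
    using restrict_cls_mult[OF a emb_carrier[OF r]] restrict_cls_mult[OF emb_carrier[OF r] b]
      restrict_cls_emb emb_e_cls_component[OF r] by simp_all
  then show "(\<lambda>p. pt (map_prod (restrict_cls e) (restrict_cls e) (a \<otimes>\<^bsub>S\<^esub> emb r, b)) p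
      - pt (map_prod (restrict_cls e) (restrict_cls e) (a, emb r \<otimes>\<^bsub>S\<^esub> b)) p)
      \<in> tensor_rel (Ae e) (Se e) (emb_e e)"
    using tensor_rel.tr_mid[OF restrict_cls_carrier[OF a] restrict_cls_carrier[OF b]
        cls_component_carrier[OF r]]
    by simp
qed

lemma mult_S_Se: "a \<in> carrier (Se e) \<Longrightarrow> b \<in> carrier (Se e) \<Longrightarrow> a \<otimes>\<^bsub>S\<^esub> b = a \<otimes>\<^bsub>Se e\<^esub> b"
  using mult_Se_left[OF Se_carrier_subset] restrict_cls_Se by simp

lemma Se_mult_closed: "a \<in> carrier (Se e) \<Longrightarrow> b \<in> carrier (Se e) \<Longrightarrow> a \<otimes>\<^bsub>Se e\<^esub> b \<in> carrier (Se e)"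
  using restrict_cls_carrier[OF S_mult_closed[OF Se_carrier_subset Se_carrier_subset]]
    restrict_cls_mult[OF Se_carrier_subset Se_carrier_subset] restrict_cls_Se by metis

lemma separability_witness_restrict_cls:
  assumes wit: "separability_witness A S emb xs"
  shows "separability_witness (Ae e) (Se e) (emb_e e) (map (map_prod (restrict_cls e) (restrict_cls e)) xs)"
proof -
  let ?r = "restrict_cls e" let ?m = "map_prod ?r ?r"
  define ys where "ys = map ?m xs"
  have xs: "fst p \<in> carrier S" "snd p \<in> carrier S" if "p \<in> set xs" for p
    using wit that unfolding separability_witness_def by auto
  have prod_eq: "fst (?m p) \<otimes>\<^bsub>Se e\<^esub> snd (?m p) = ?r (fst p \<otimes>\<^bsub>S\<^esub> snd p)" if "p \<in> set xs" for p
    using restrict_cls_mult xs[OF that] by simp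
  have ys: "set ys \<subseteq> carrier (Se e) \<times> carrier (Se e)"
    using xs restrict_cls_carrier unfolding ys_def by auto
  have "finsum (Se e) (\<lambda>i. fst (ys ! i) \<otimes>\<^bsub>Se e\<^esub> snd (ys ! i)) {..<length ys}
      = lsum (Se e) (\<lambda>p. fst p \<otimes>\<^bsub>Se e\<^esub> snd p) ys"
    using ys Se_mult_closed by (intro abelian_monoid.finsum_nth_eq_lsum[OF abelian_monoid_Se]) auto
  also have "\<dots> = ?r (lsum S (\<lambda>p. fst p \<otimes>\<^bsub>S\<^esub> snd p) xs)"
    unfolding ys_def lsum_map restrict_cls_lsum by (rule lsum_cong) (rule prod_eq)
  also have "lsum S (\<lambda>p. fst p \<otimes>\<^bsub>S\<^esub> snd p) xs
      = finsum S (\<lambda>i. fst (xs ! i) \<otimes>\<^bsub>S\<^esub> snd (xs ! i)) {..<length xs}"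
    using xs S_mult_closed by (intro abelian_monoid.finsum_nth_eq_lsum[OF abelian_monoid_S, symmetric]) auto
  also have "\<dots> = \<one>\<^bsub>S\<^esub>" using wit unfolding separability_witness_def by blast
  finally have one: "finsum (Se e) (\<lambda>i. fst (ys ! i) \<otimes>\<^bsub>Se e\<^esub> snd (ys ! i)) {..<length ys} = \<one>\<^bsub>Se e\<^esub>"
    using restrict_cls_one by simp
  have comm: "tensor_eq (Ae e) (Se e) (emb_e e) (map (\<lambda>(a, b). (s \<otimes>\<^bsub>Se e\<^esub> a, b)) ys)
      (map (\<lambda>(a, b). (a, b \<otimes>\<^bsub>Se e\<^esub> s)) ys)" if s: "s \<in> carrier (Se e)" for s
  proof -
    have sS: "s \<in> carrier S" using Se_carrier_subset[OF s] .
    have "tensor_eq (Ae e) (Se e) (emb_e e) (map ?m (map (\<lambda>(a, b). (s \<otimes>\<^bsub>S\<^esub> a, b)) xs))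
        (map ?m (map (\<lambda>(a, b). (a, b \<otimes>\<^bsub>S\<^esub> s)) xs))"
      using wit sS tensor_rel_restrict_cls unfolding separability_witness_def
      by (intro tensor_eq_map) auto
    moreover have "map ?m (map (\<lambda>(a, b). (s \<otimes>\<^bsub>S\<^esub> a, b)) xs) = map (\<lambda>(a, b). (s \<otimes>\<^bsub>Se e\<^esub> a, b)) ys"
      and "map ?m (map (\<lambda>(a, b). (a, b \<otimes>\<^bsub>S\<^esub> s)) xs) = map (\<lambda>(a, b). (a, b \<otimes>\<^bsub>Se e\<^esub> s)) ys"
      unfolding ys_def using restrict_cls_mult sS xs restrict_cls_Se[OF s] by (auto simp: split_beta)
    ultimately show ?thesis by simp
  qed
  show ?thesis unfolding separability_witness_def ys_def[symmetric] using ys one comm by blast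
qed

lemma cls_representatives:
  obtains L where "distinct L" and "set L \<subseteq> obj" and "\<And>f. f \<in> obj \<Longrightarrow> \<exists>!e. e \<in> set L \<and> f \<in> cls e"
proof -
  define rep where "rep c = (SOME e. e \<in> obj \<and> cls e = c)" for c
  have rep: "rep c \<in> obj \<and> cls (rep c) = c" if "c \<in> cls ` obj" for c
    unfolding rep_def using that by (rule someI_ex[OF imageE]) blast
  obtain L where L: "set L = rep ` cls ` obj" "distinct L"
    using finite_distinct_list finite_obj by (metis finite_imageI)
  show thesis
  proof (rule that[OF L(2)])
    show "set L \<subseteq> obj" using rep L(1) by auto
    fix f assume f: "f \<in> obj"
    show "\<exists>!e. e \<in> set L \<and> f \<in> cls e"
    proof (rule ex1I)
      show "rep (cls f) \<in> set L \<and> f \<in> cls (rep (cls f))" using L(1) f rep cls_self by auto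
    next
      fix e assume e: "e \<in> set L \<and> f \<in> cls e"
      then obtain c where c: "c \<in> cls ` obj" "e = rep c" using L(1) by auto
      then have "cls e = c" using rep by simp
      moreover have "cls f = cls e" using cls_eq e by blast
      ultimately show "e = rep (cls f)" using c by simp
    qed
  qed
qed

lemma lsum_one_Se:
  assumes L: "distinct L" "set L \<subseteq> obj" "\<And>f. f \<in> obj \<Longrightarrow> \<exists>!e. e \<in> set L \<and> f \<in> cls e"
  shows "lsum S (\<lambda>e. \<one>\<^bsub>Se e\<^esub>) L = \<one>\<^bsub>S\<^esub>"
proof
  fix g
  let ?F = "\<lambda>e. if g \<in> cls e then u g else \<zero>\<^bsub>A\<^esub>"
  have F_carrier: "?F e \<in> carrier A" for e
    using u_carrier cls_subset_obj obj_mor by auto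
  have "lsum S (\<lambda>e. \<one>\<^bsub>Se e\<^esub>) L g = lsum A ?F L"
    unfolding lsum_S_apply by (rule lsum_cong) (simp add: skew_ring_simps sub_gpd_simps class_ring_simps)
  also have "\<dots> = finsum A ?F (set L)" by (rule A.lsum_distinct[OF L(1) F_carrier])
  also have "\<dots> = \<one>\<^bsub>S\<^esub> g"
  proof (cases "g \<in> obj")
    case True
    then obtain e where e: "e \<in> set L" "g \<in> cls e" and uniq: "\<And>e'. e' \<in> set L \<Longrightarrow> g \<in> cls e' \<Longrightarrow> e' = e"
      using L(3)[OF True] by (elim ex1E) auto
    have "finsum A ?F (set L) = finsum A (\<lambda>e'. if e' = e then u g else \<zero>\<^bsub>A\<^esub>) (set L)"
    proof (rule A.finsum_cong')
      fix e' assume "e' \<in> set L"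
      then have "g \<in> cls e' \<longleftrightarrow> e' = e" using uniq e(2) by blast
      then show "?F e' = (if e' = e then u g else \<zero>\<^bsub>A\<^esub>)" by simp
    qed (use u_carrier obj_mor True in auto)
    also have "\<dots> = u g"
      using A.finsum_singleton[OF e(1), of "\<lambda>_. u g"] u_carrier obj_mor True by (simp add: eq_commute)
    finally show ?thesis using True by (simp add: skew_ring_simps)
  next
    case False
    then have "finsum A ?F (set L) = \<zero>\<^bsub>A\<^esub>" using cls_subset_obj by (intro A.finsum_zero_eqI) auto
    then show ?thesis using False by (simp add: skew_ring_simps)
  qed
  finally show "lsum S (\<lambda>e. \<one>\<^bsub>Se e\<^esub>) L g = \<one>\<^bsub>S\<^esub> g" .
qed

lemma separability_witness_concat:
  assumes L: "distinct L" "set L \<subseteq> obj" "\<And>f. f \<in> obj \<Longrightarrow> \<exists>!e. e \<in> set L \<and> f \<in> cls e"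
    and wit: "\<And>e. e \<in> set L \<Longrightarrow> separability_witness (Ae e) (Se e) (emb_e e) (X e)"
  shows "separability_witness A S emb (concat (map X L))"
proof -
  define Xs where "Xs = concat (map X L)"
  have X: "fst p \<in> carrier (Se e)" "snd p \<in> carrier (Se e)" if "e \<in> set L" "p \<in> set (X e)" for e p
    using wit[OF that(1)] that(2) unfolding separability_witness_def by auto
  have Xs: "set Xs \<subseteq> carrier S \<times> carrier S"
    using X Se_carrier_subset unfolding Xs_def by fastforce
  let ?F = "\<lambda>p. fst p \<otimes>\<^bsub>S\<^esub> snd p"
  have F_carrier: "?F p \<in> carrier S" if "p \<in> set Xs" for p
    using Xs that S_mult_closed by auto
  have block_one: "lsum S ?F (X e) = \<one>\<^bsub>Se e\<^esub>" if e: "e \<in> set L" for e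
  proof -
    have "lsum S ?F (X e) = lsum (Se e) (\<lambda>p. fst p \<otimes>\<^bsub>Se e\<^esub> snd p) (X e)"
      unfolding lsum_S_eq_Se[of _ _ e] by (rule lsum_cong) (use mult_S_Se X[OF e] in auto)
    also have "\<dots> = finsum (Se e) (\<lambda>i. fst (X e ! i) \<otimes>\<^bsub>Se e\<^esub> snd (X e ! i)) {..<length (X e)}"
      using X[OF e] Se_mult_closed
      by (intro abelian_monoid.finsum_nth_eq_lsum[OF abelian_monoid_Se, symmetric]) auto
    also have "\<dots> = \<one>\<^bsub>Se e\<^esub>" using wit[OF e] unfolding separability_witness_def by blast
    finally show ?thesis .
  qed
  have "finsum S (\<lambda>i. fst (Xs ! i) \<otimes>\<^bsub>S\<^esub> snd (Xs ! i)) {..<length Xs} = lsum S ?F Xs"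
    using F_carrier by (rule abelian_monoid.finsum_nth_eq_lsum[OF abelian_monoid_S])
  also have "\<dots> = lsum S (\<lambda>e. lsum S ?F (X e)) L"
    using abelian_monoid.lsum_concat[OF abelian_monoid_S, of "map X L" ?F] F_carrier
    unfolding Xs_def lsum_map by simp
  also have "\<dots> = lsum S (\<lambda>e. \<one>\<^bsub>Se e\<^esub>) L" by (rule lsum_cong) (rule block_one)
  also have "\<dots> = \<one>\<^bsub>S\<^esub>" by (rule lsum_one_Se[OF L])
  finally have one: "finsum S (\<lambda>i. fst (Xs ! i) \<otimes>\<^bsub>S\<^esub> snd (Xs ! i)) {..<length Xs} = \<one>\<^bsub>S\<^esub>" .
  \<comment> \<open>multiplying by s acts on the block of class e through its restriction to that class\<close>
  have comm: "tensor_eq A S emb (map (\<lambda>(a, b). (s \<otimes>\<^bsub>S\<^esub> a, b)) Xs) (map (\<lambda>(a, b). (a, b \<otimes>\<^bsub>S\<^esub> s)) Xs)"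
    if s: "s \<in> carrier S" for s
  proof -
    have "map (\<lambda>(a, b). (s \<otimes>\<^bsub>S\<^esub> a, b)) Xs =
        concat (map (\<lambda>e. map (\<lambda>(a, b). (restrict_cls e s \<otimes>\<^bsub>Se e\<^esub> a, b)) (X e)) L)"
      and "map (\<lambda>(a, b). (a, b \<otimes>\<^bsub>S\<^esub> s)) Xs =
        concat (map (\<lambda>e. map (\<lambda>(a, b). (a, b \<otimes>\<^bsub>Se e\<^esub> restrict_cls e s)) (X e)) L)"
      unfolding Xs_def map_concat map_map using X mult_Se_left[OF s] mult_Se_right[OF s]
      by (auto intro!: arg_cong[where f = concat] map_cong)
    moreover have "tensor_eq A S emb (map (\<lambda>(a, b). (restrict_cls e s \<otimes>\<^bsub>Se e\<^esub> a, b)) (X e))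
        (map (\<lambda>(a, b). (a, b \<otimes>\<^bsub>Se e\<^esub> restrict_cls e s)) (X e))" if e: "e \<in> set L" for e
      using wit[OF e] restrict_cls_carrier[OF s] tensor_eq_mono[OF tensor_rel_Se_subset]
      unfolding separability_witness_def by blast
    ultimately show ?thesis by (simp add: tensor_eq_concat)
  qed
  show ?thesis unfolding separability_witness_def Xs_def[symmetric] using Xs one comm by blast
qed

end

theorem proposition3p1:
  fixes G :: "'g gpd" and A :: "('a, 'm) ring_scheme"
    and D :: "'g \<Rightarrow> 'a set" and u :: "'g \<Rightarrow> 'a" and act :: "'g \<Rightarrow> 'a \<Rightarrow> 'a"
  assumes "groupoid G"
    and "finite (gobj G)"
    and "ring A"
    and "unital_partial_action G A D u act"
    and "direct_sum_objs G A D"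
  shows "separable_ext A (skew_ring G A D u act) (skew_emb G A u) \<longleftrightarrow>
         (\<forall>e\<in>gobj G. separable_ext (class_ring G A D u e)
                         (skew_ring (sub_gpd G e) (class_ring G A D u e) D u act)
                         (skew_emb (sub_gpd G e) (class_ring G A D u e) u))"
proof -
  interpret partial_action_direct_sum G A D u act
    using assms by (intro partial_action_direct_sum.intro is_groupoid.intro
        partial_action_direct_sum_axioms.intro)
  show ?thesis
  proof
    assume "separable_ext A S emb"
    then show "\<forall>e\<in>obj. separable_ext (Ae e) (Se e) (emb_e e)"
      unfolding separable_ext_iff_witness using separability_witness_restrict_cls by blast
  next
    assume "\<forall>e\<in>obj. separable_ext (Ae e) (Se e) (emb_e e)"
    then obtain X where X: "\<And>e. e \<in> obj \<Longrightarrow> separability_witness (Ae e) (Se e) (emb_e e) (X e)"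
      unfolding separable_ext_iff_witness by metis
    obtain L where "distinct L" "set L \<subseteq> obj" "\<And>f. f \<in> obj \<Longrightarrow> \<exists>!e. e \<in> set L \<and> f \<in> cls e"
      by (rule cls_representatives) blast
    then have "separability_witness A S emb (concat (map X L))"
      using X by (intro separability_witness_concat) auto
    then show "separable_ext A S emb" unfolding separable_ext_iff_witness by blast
  qed
qed

end
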